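(* Let $p$ be a prime and $f\in\mathbb{Z}_p[x]$ with $\deg f\ge 2$. If $E\subset\mathbb{Z}_p$ is a clopen $f$-invariant set such that $f:E\to E$ is minimal, then $f:E\to E$ is topologically conjugate to the adding machine $\tau:x\mapsto x+1$ on the odometer $\mathbb{Z}_{(p_s)}$, where $$(p_s)_{s\ge1}=(k,\,kd,\,kdp,\,kdp^2,\,\dots)$$ for some integers $k,d$ with $1\le k\le p$ and $d\mid (p-1)$.
   Context: For a sequence of positive integers $(p_s)_{s\ge1}$ with $p_s\mid p_{s+1}$, the odometer $\mathbb{Z}_{(p_s)}$ is the inverse limit $\varprojlim \mathbb{Z}/p_s\mathbb{Z}$ (a profinite group), and the adding machine is the map $\tau(x)=x+1$ on it. $f:E\to E$ is minimal if every orbit is dense in $E$; topological conjugacy means there is a homeomorphism $h:E\to\mathbb{Z}_{(p_s)}$ with $h\circ f=\tau\circ h$. *)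

theory Defs
  imports "HOL-Analysis.Analysis" "HOL-Computational_Algebra.Primes"
begin

text \<open>Inverse limit of Z/P(s)Z (s = 0,1,2,...), realised as compatible
  sequences of residues x s in {0..<P s}, with the subspace topology of the
  product of discrete spaces (the inverse-limit topology).\<close>

definition odometer :: "(nat \<Rightarrow> nat) \<Rightarrow> (nat \<Rightarrow> nat) set" where
  "odometer P = {x. \<forall>s. x s < P s \<and> x s = x (Suc s) mod P s}"

definition odometer_top :: "(nat \<Rightarrow> nat) \<Rightarrow> (nat \<Rightarrow> nat) topology" where
  "odometer_top P = subtopology (product_topology (\<lambda>_. discrete_topology UNIV) UNIV) (odometer P)"

definition adding_machine :: "(nat \<Rightarrow> nat) \<Rightarrow> (nat \<Rightarrow> nat) \<Rightarrow> (nat \<Rightarrow> nat)" where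
  "adding_machine P x = (\<lambda>s. (x s + 1) mod P s)"

definition Zp :: "nat \<Rightarrow> (nat \<Rightarrow> nat) set" where
  "Zp p = odometer (\<lambda>s. p ^ s)"

definition Zp_top :: "nat \<Rightarrow> (nat \<Rightarrow> nat) topology" where
  "Zp_top p = odometer_top (\<lambda>s. p ^ s)"

definition Zp_zero :: "nat \<Rightarrow> nat" where
  "Zp_zero = (\<lambda>s. 0)"

text \<open>Evaluation of the polynomial sum_{i<=n} c_i X^i with coefficients c_i in Z_p,
  computed levelwise modulo p^s (ring operations of Z_p are levelwise).\<close>
definition Zp_poly_eval :: "nat \<Rightarrow> nat \<Rightarrow> (nat \<Rightarrow> nat \<Rightarrow> nat) \<Rightarrow> (nat \<Rightarrow> nat) \<Rightarrow> (nat \<Rightarrow> nat)" where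
  "Zp_poly_eval p n c x = (\<lambda>s. (\<Sum>i\<le>n. c i s * x s ^ i) mod p ^ s)"

definition minimal_on :: "'a topology \<Rightarrow> 'a set \<Rightarrow> ('a \<Rightarrow> 'a) \<Rightarrow> bool" where
  "minimal_on X E f \<longleftrightarrow>
     (\<forall>x\<in>E. (subtopology X E) closure_of {(f ^^ m) x | m. True} = E)"

definition top_conjugate :: "'a topology \<Rightarrow> ('a \<Rightarrow> 'a) \<Rightarrow> 'b topology \<Rightarrow> ('b \<Rightarrow> 'b) \<Rightarrow> bool" where
  "top_conjugate X f Y g \<longleftrightarrow>
     (\<exists>h. homeomorphic_map X Y h \<and> (\<forall>x\<in>topspace X. h (f x) = g (h x)))"

text \<open>The sequence (k, kd, kdp, kdp^2, ...), indexed from 0.\<close>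
definition odo_seq :: "nat \<Rightarrow> nat \<Rightarrow> nat \<Rightarrow> nat \<Rightarrow> nat" where
  "odo_seq p k d s = (if s = 0 then k else k * d * p ^ (s - 1))"

end

theory Submission
  imports Defs "HOL-Number_Theory.Number_Theory" "HOL-Combinatorics.Cycles"
begin

text \<open>Fix \<open>x\<^sub>0 \<in> E\<close>. By minimality, \<open>f mod p\<^sup>s\<close> permutes the image of \<open>E\<close> in \<open>\<int>/p\<^sup>s\<close> as a single
  cycle through \<open>x\<^sub>0\<close>, of length \<open>\<ell>\<^sub>s\<close>, and \<open>\<ell>\<^sub>s\<close> divides \<open>\<ell>\<^sub>s\<^sub>+\<^sub>1\<close>. Expanding \<open>f\<close> to first order
  along the cycle gives, modulo \<open>p\<^sup>s\<^sup>+\<^sup>1\<close> and for \<open>s \<ge> 1\<close>,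
  \<open>f\<^bsup>r\<ell>\<^sub>s\<^esup>(x\<^sub>0) \<equiv> x\<^sub>0 + p\<^sup>s \<alpha> (1 + M\<^sub>s + \<dots> + M\<^sub>s\<^bsup>r-1\<^esup>)\<close>, where \<open>M\<^sub>s\<close> is the product of \<open>f'\<close>
  over the cycle, taken modulo \<open>p\<close>. Hence \<open>\<ell>\<^sub>s\<^sub>+\<^sub>1 / \<ell>\<^sub>s\<close> is \<open>1\<close>, or \<open>p\<close> (when \<open>M\<^sub>s \<equiv> 1\<close>), or
  the order of \<open>M\<^sub>s\<close> modulo \<open>p\<close>, a divisor of \<open>p - 1\<close>; and \<open>M\<^sub>s\<^sub>+\<^sub>1 = M\<^sub>s\<^bsup>\<ell>\<^sub>s\<^sub>+\<^sub>1/\<ell>\<^sub>s\<^esup>\<close>.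
  So with \<open>k = \<ell>\<^sub>1 \<le> p\<close> and \<open>d\<close> the order of \<open>M\<^sub>1\<close>, the periods run \<open>k, \<dots>, k, kd, kdp, kdp\<^sup>2, \<dots>\<close>,
  and they do grow because \<open>E\<close> is open. Sending \<open>x \<in> E\<close> to its positions on the level cycles
  is then a conjugacy with the adding machine on the odometer of \<open>(k, kd, kdp, \<dots>)\<close>.\<close>

section \<open>Odometers\<close>

definition dvd_chain :: "(nat \<Rightarrow> nat) \<Rightarrow> bool" where
  "dvd_chain P \<longleftrightarrow> (\<forall>s. P s dvd P (Suc s))"

lemma dvd_chain_le:
  assumes "dvd_chain P" "s \<le> t"
  shows "P s dvd P t"
  using assms(2)
proof (induction t rule: dec_induct)
  case (step t)
  then show ?case
    using assms(1) dvd_trans unfolding dvd_chain_def by blast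
qed simp

lemma odometer_mod_le:
  assumes "x \<in> odometer P" "dvd_chain P" "s \<le> t"
  shows "x s = x t mod P s"
  using assms(3)
proof (induction t rule: dec_induct)
  case base
  have "x s < P s" using assms(1) unfolding odometer_def by blast
  then show ?case by simp
next
  case (step t)
  have "x t = x (Suc t) mod P t" using assms(1) unfolding odometer_def by blast
  then show ?case
    using step.IH dvd_chain_le[OF assms(2) step.hyps(1)] by (simp add: mod_mod_cancel)
qed

lemma topspace_odometer_top [simp]: "topspace (odometer_top P) = odometer P"
  by (simp add: odometer_top_def)

lemma openin_odometer_cylinder: "openin (odometer_top P) {y \<in> odometer P. y s = v}"
proof -
  have "continuous_map (product_topology (\<lambda>_::nat. discrete_topology (UNIV::nat set)) UNIV)
         (discrete_topology UNIV) (\<lambda>x. x s)"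
    by (rule continuous_map_product_projection) simp
  from openin_continuous_map_preimage[OF this, of "{v}"]
  have "openin (product_topology (\<lambda>_. discrete_topology UNIV) UNIV) {y. y s = v}"
    by simp
  then show ?thesis unfolding odometer_top_def openin_subtopology by blast
qed

text \<open>A product-open set restricts only finitely many coordinates, and along a divisibility
  chain the coordinate with the largest index determines all smaller ones.\<close>
lemma odometer_open_contains_cylinder:
  assumes "dvd_chain P" "openin (odometer_top P) U" "x \<in> U"
  obtains s where "\<And>y. y \<in> odometer P \<Longrightarrow> y s = x s \<Longrightarrow> y \<in> U"
proof -
  obtain T where T: "openin (product_topology (\<lambda>_. discrete_topology UNIV) UNIV) T"
    and U: "U = T \<inter> odometer P"
    using assms(2) unfolding odometer_top_def openin_subtopology by blast
  have xT: "x \<in> T" and xO: "x \<in> odometer P" using assms(3) U by auto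
  obtain V where fin: "finite {i. V i \<noteq> (UNIV::nat set)}"
    and xV: "x \<in> Pi\<^sub>E UNIV V" and VT: "Pi\<^sub>E UNIV V \<subseteq> T"
    using T xT unfolding openin_product_topology_alt by auto
  define s where "s = Max (insert 0 {i. V i \<noteq> UNIV})"
  have V_UNIV: "V i = UNIV" if "i > s" for i
    using that fin unfolding s_def
    by (metis (mono_tags, lifting) Max_ge finite_insert insertCI leD mem_Collect_eq)
  show ?thesis
  proof
    fix y assume yO: "y \<in> odometer P" and ys: "y s = x s"
    have "y i \<in> V i" for i
    proof (cases "i \<le> s")
      case True
      then have "y i = x i"
        using odometer_mod_le[OF yO assms(1) True] odometer_mod_le[OF xO assms(1) True] ys
        by simp
      then show ?thesis using xV by auto
    qed (simp add: V_UNIV)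
    then show "y \<in> U" using VT U yO by (auto simp: PiE_iff)
  qed
qed

lemma continuous_map_odometer_to_discrete:
  assumes "S \<subseteq> odometer P"
    and "\<And>x y. x \<in> S \<Longrightarrow> y \<in> S \<Longrightarrow> x r = y r \<Longrightarrow> g x = g y"
  shows "continuous_map (subtopology (odometer_top P) S) (discrete_topology UNIV) g"
  unfolding continuous_map_def
proof (intro conjI allI impI)
  let ?X = "subtopology (odometer_top P) S"
  show "g \<in> topspace ?X \<rightarrow> topspace (discrete_topology UNIV)" by simp
  fix W :: "'a set"
  have "\<exists>T. openin ?X T \<and> x \<in> T \<and> T \<subseteq> {x \<in> topspace ?X. g x \<in> W}"
    if x: "x \<in> {x \<in> topspace ?X. g x \<in> W}" for x
  proof (intro exI conjI)
    let ?T = "{y \<in> odometer P. y r = x r} \<inter> S"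
    show "openin ?X ?T"
      using openin_odometer_cylinder unfolding openin_subtopology by blast
    show "?T \<subseteq> {x \<in> topspace ?X. g x \<in> W}"
    proof
      fix y assume y: "y \<in> ?T"
      then have "g y = g x" using assms(2)[of y x] x by auto
      then show "y \<in> {x \<in> topspace ?X. g x \<in> W}" using x y assms(1) by auto
    qed
    show "x \<in> ?T" using x assms(1) by auto
  qed
  then show "openin ?X {x \<in> topspace ?X. g x \<in> W}"
    by (intro openin_subopen[THEN iffD2] ballI) blast
qed

lemma continuous_map_odometer:
  assumes "S \<subseteq> odometer P" "h ` S \<subseteq> odometer Q"
    and "\<And>i. \<exists>r. \<forall>x\<in>S. \<forall>y\<in>S. x r = y r \<longrightarrow> h x i = h y i"
  shows "continuous_map (subtopology (odometer_top P) S) (odometer_top Q) h"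
proof -
  have "continuous_map (subtopology (odometer_top P) S)
          (product_topology (\<lambda>_. discrete_topology UNIV) UNIV) h"
    unfolding continuous_map_componentwise_UNIV
  proof
    fix i
    obtain r where "\<forall>x\<in>S. \<forall>y\<in>S. x r = y r \<longrightarrow> h x i = h y i" using assms(3) by blast
    then show "continuous_map (subtopology (odometer_top P) S) (discrete_topology UNIV) (\<lambda>x. h x i)"
      using continuous_map_odometer_to_discrete[OF assms(1), of r "\<lambda>x. h x i"] by blast
  qed
  then show ?thesis
    using assms(1,2) unfolding odometer_top_def[of Q] continuous_map_in_subtopology by auto
qed

lemma dvd_chain_power: "dvd_chain (\<lambda>s. (p::nat) ^ s)"
  unfolding dvd_chain_def by simp

lemma Zp_mod_le: "x \<in> Zp p \<Longrightarrow> s \<le> t \<Longrightarrow> x s = x t mod p ^ s"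
  unfolding Zp_def using odometer_mod_le dvd_chain_power by blast

lemma Zp_less: "x \<in> Zp p \<Longrightarrow> x s < p ^ s"
  unfolding Zp_def odometer_def by blast

lemma residues_in_Zp: "0 < (p::nat) \<Longrightarrow> (\<lambda>s. a mod p ^ s) \<in> Zp p"
  unfolding Zp_def odometer_def by (simp add: mod_mod_cancel)

lemma odo_seq_Suc: "odo_seq p k d (Suc s) = k * d * p ^ s"
  by (simp add: odo_seq_def)

lemma odo_seq_pos: "0 < p \<Longrightarrow> 0 < k \<Longrightarrow> 0 < d \<Longrightarrow> 0 < odo_seq p k d s"
  unfolding odo_seq_def by simp

lemma dvd_chain_odo_seq: "dvd_chain (odo_seq p k d)"
  unfolding dvd_chain_def odo_seq_def
  by (auto simp: le_imp_power_dvd mult_dvd_mono)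

lemma funpow_eq_iff_mod_least_power:
  assumes "(f ^^ m) x = x" "0 < m"
  shows "(f ^^ i) x = (f ^^ j) x \<longleftrightarrow> i mod least_power f x = j mod least_power f x"
proof -
  define L where "L = least_power f x"
  have L: "(f ^^ L) x = x" "0 < L"
    using least_powerI[OF assms] unfolding L_def by auto
  have no_return: "(f ^^ a) x \<noteq> (f ^^ b) x" if "a < b" "b < L" for a b
  proof
    assume eq: "(f ^^ a) x = (f ^^ b) x"
    have "(f ^^ (L - b + a)) x = (f ^^ (L - b + b)) x"
      by (simp add: funpow_add eq)
    also have "\<dots> = x" using L(1) that(2) by simp
    finally have "L \<le> L - b + a"
      using least_power_le[where f = f and n = "L - b + a" and x = x] that unfolding L_def by simp
    then show False using that by simp
  qed
  have "i' = j'" if "i' < L" "j' < L" "(f ^^ i') x = (f ^^ j') x" for i' j'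
    using no_return[of i' j'] no_return[of j' i'] that by (metis linorder_neqE_nat)
  then show ?thesis
    using funpow_mod_eq[OF L(1), of i] funpow_mod_eq[OF L(1), of j] L(2)
    unfolding L_def[symmetric] by (metis mod_less_divisor)
qed

lemma power_add_first_order_Suc:
  fixes B h :: "'a::comm_ring_1"
  shows "\<exists>K. (B + h) ^ Suc j = B ^ Suc j + of_nat (Suc j) * h * B ^ j + h\<^sup>2 * K"
proof (induction j)
  case 0
  show ?case by (rule exI[of _ 0]) simp
next
  case (Suc j)
  then obtain K where "(B + h) ^ Suc j = B ^ Suc j + of_nat (Suc j) * h * B ^ j + h\<^sup>2 * K"
    by blast
  then have "(B + h) ^ Suc (Suc j) = (B + h) * (B ^ Suc j + of_nat (Suc j) * h * B ^ j + h\<^sup>2 * K)"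
    by (simp only: power_Suc[of "B + h" "Suc j"])
  also have "\<dots> = B ^ Suc (Suc j) + of_nat (Suc (Suc j)) * h * B ^ Suc j
      + h\<^sup>2 * (B * K + of_nat (Suc j) * B ^ j + h * K)"
    by (simp add: algebra_simps power2_eq_square)
  finally show ?case by blast
qed

lemma power_add_first_order:
  fixes B h :: "'a::comm_ring_1"
  shows "\<exists>K. (B + h) ^ i = B ^ i + of_nat i * h * B ^ (i - 1) + h\<^sup>2 * K"
  using power_add_first_order_Suc[of B h] by (cases i) (auto intro: exI[of _ 0])

lemma polynomial_add_first_order:
  fixes B h :: "'a::comm_ring_1" and C :: "nat \<Rightarrow> 'a"
  shows "\<exists>K. (\<Sum>i\<le>n. C i * (B + h) ^ i) =
     (\<Sum>i\<le>n. C i * B ^ i) + h * (\<Sum>i\<le>n. C i * of_nat i * B ^ (i - 1)) + h\<^sup>2 * K"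
proof -
  obtain K where K: "\<And>i. (B + h) ^ i = B ^ i + of_nat i * h * B ^ (i - 1) + h\<^sup>2 * K i"
    using power_add_first_order[of B h] by metis
  have "(\<Sum>i\<le>n. C i * (B + h) ^ i) =
     (\<Sum>i\<le>n. C i * B ^ i + h * (C i * of_nat i * B ^ (i - 1)) + h\<^sup>2 * (C i * K i))"
    by (intro sum.cong refl) (simp add: K algebra_simps)
  also have "\<dots> = (\<Sum>i\<le>n. C i * B ^ i) + h * (\<Sum>i\<le>n. C i * of_nat i * B ^ (i - 1))
       + h\<^sup>2 * (\<Sum>i\<le>n. C i * K i)"
    by (simp add: sum.distrib sum_distrib_left)
  finally show ?thesis by blast
qed

lemma geometric_sum_Suc:
  fixes M :: "'a::comm_semiring_1"
  shows "(\<Sum>i<Suc r. M ^ i) = 1 + M * (\<Sum>i<r. M ^ i)"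
  by (simp add: sum.lessThan_Suc_shift sum_distrib_left del: sum.lessThan_Suc)

lemma prod_lessThan_periodic:
  assumes "\<And>i. f (i + L) = f i"
  shows "(\<Prod>i<q * L. f i) = (\<Prod>i<L. f i) ^ q"
proof -
  have shift: "f (m * L + i) = f i" for m i
  proof (induction m)
    case (Suc m)
    have "f (Suc m * L + i) = f ((m * L + i) + L)" by (simp add: algebra_simps)
    then show ?case using Suc assms by simp
  qed simp
  have "(\<Prod>i<q * L. f i) = (\<Prod>m<q. \<Prod>i\<in>{m * L..<m * L + L}. f i)"
    by (rule prod.nat_group[symmetric])
  also have "\<dots> = (\<Prod>m<q. \<Prod>i<L. f (m * L + i))"
    using prod.shift_bounds_nat_ivl[of f 0 "m * L" L for m]
    by (simp add: atLeast0LessThan add.commute)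
  also have "\<dots> = (\<Prod>i<L. f i) ^ q" by (simp add: shift)
  finally show ?thesis .
qed

lemma cong_mult_power_Suc:
  fixes q X Y Z :: int
  assumes "[X = Y] (mod q)"
  shows "[q ^ s * Z * X = q ^ s * Z * Y] (mod q ^ Suc s)"
proof -
  have "q ^ s * q dvd (q ^ s * Z) * (X - Y)"
    using assms by (intro mult_dvd_mono) (simp_all add: cong_iff_dvd_diff)
  then show ?thesis by (simp add: cong_iff_dvd_diff algebra_simps)
qed

lemma cong_pow_pred_prime_int:
  fixes M :: int
  assumes "prime p" "\<not> int p dvd M"
  shows "[M ^ (p - 1) = 1] (mod int p)"
proof -
  define a where "a = nat (M mod int p)"
  have a: "int a = M mod int p"
    unfolding a_def using prime_gt_0_nat[OF assms(1)] by simp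
  have "\<not> p dvd a"
  proof
    assume "p dvd a"
    then have "int p dvd M mod int p" using a by (metis int_dvd_int_iff)
    then show False using assms(2) by (simp add: dvd_mod_iff)
  qed
  then have "[a ^ (p - 1) = 1] (mod p)" using fermat_theorem[OF assms(1)] by blast
  then have "[int a ^ (p - 1) = 1] (mod int p)"
    using cong_int_iff[of "a ^ (p - 1)" 1 p] by simp
  moreover have "[M ^ (p - 1) = int a ^ (p - 1)] (mod int p)"
    unfolding a by (intro cong_pow) (simp add: cong_def)
  ultimately show ?thesis using cong_trans by blast
qed

text \<open>Applied below with \<open>j = \<ell>\<^sub>s\<^sub>+\<^sub>1 / \<ell>\<^sub>s\<close> and \<open>M = M\<^sub>s\<close>.\<close>
lemma dvd_iff_dvd_geometric_sum_cases:
  fixes M \<alpha> :: int and p j :: nat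
  assumes p: "prime p" and "0 < j"
    and dvd_iff: "\<And>r. j dvd r \<longleftrightarrow> int p dvd \<alpha> * (\<Sum>i<r. M ^ i)"
  shows "j = 1 \<or> ([M = 1] (mod int p) \<and> j = p) \<or>
    (\<not> [M = 1] (mod int p) \<and> (\<forall>r. j dvd r \<longleftrightarrow> [M ^ r = 1] (mod int p)) \<and> j dvd p - 1)"
proof (cases "int p dvd \<alpha>")
  case True
  then show ?thesis using dvd_iff[of 1] by simp
next
  case False
  have pr: "prime (int p)" using p by simp
  then have dvd_iff': "j dvd r \<longleftrightarrow> int p dvd (\<Sum>i<r. M ^ i)" for r
    using dvd_iff[of r] False prime_dvd_mult_iff by blast
  have M_unit: "\<not> int p dvd M"
  proof
    assume "int p dvd M"
    then have "[M * (\<Sum>i<j - 1. M ^ i) = 0] (mod int p)" by (simp add: cong_0_iff)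
    then have "[(\<Sum>i<Suc (j - 1). M ^ i) = 1] (mod int p)"
      unfolding geometric_sum_Suc using cong_add_lcancel_0 by blast
    moreover have "int p dvd (\<Sum>i<Suc (j - 1). M ^ i)"
      using dvd_iff'[of j] \<open>0 < j\<close> by simp
    ultimately have "int p dvd 1" using cong_dvd_iff by blast
    then show False using p by simp
  qed
  show ?thesis
  proof (cases "[M = 1] (mod int p)")
    case True
    have "[(\<Sum>i<r. M ^ i) = (\<Sum>i<r. 1 ^ i)] (mod int p)" for r
      by (intro cong_sum cong_pow True)
    then have "[(\<Sum>i<r. M ^ i) = int r] (mod int p)" for r by simp
    then have j_dvd_iff: "j dvd r \<longleftrightarrow> p dvd r" for r
      using dvd_iff'[of r] cong_dvd_iff[of _ "int r"] by simp
    have "j = p" using j_dvd_iff[of j] j_dvd_iff[of p] by (simp add: dvd_antisym)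
    then show ?thesis using True by simp
  next
    case False
    then have "\<not> int p dvd M - 1" by (simp add: cong_iff_dvd_diff)
    have order: "j dvd r \<longleftrightarrow> [M ^ r = 1] (mod int p)" for r
    proof -
      have "j dvd r \<longleftrightarrow> int p dvd (M - 1) * (\<Sum>i<r. M ^ i)"
        using dvd_iff'[of r] prime_dvd_mult_iff[OF pr] \<open>\<not> int p dvd M - 1\<close> by blast
      also have "\<dots> \<longleftrightarrow> [M ^ r = 1] (mod int p)"
        by (simp add: power_diff_1_eq[symmetric] cong_iff_dvd_diff)
      finally show ?thesis .
    qed
    then have "j dvd p - 1" using cong_pow_pred_prime_int[OF p M_unit] by blast
    then show ?thesis using False order by blast
  qed
qed

locale Zp_poly =
  fixes p n :: nat and c :: "nat \<Rightarrow> nat \<Rightarrow> nat"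
  assumes prime: "prime p"
    and coeffs: "\<And>i. i \<le> n \<Longrightarrow> c i \<in> Zp p"
begin

abbreviation F :: "(nat \<Rightarrow> nat) \<Rightarrow> nat \<Rightarrow> nat" where
  "F \<equiv> Zp_poly_eval p n c"

definition f_mod :: "nat \<Rightarrow> nat \<Rightarrow> nat" where
  "f_mod s a = (\<Sum>i\<le>n. c i s * a ^ i) mod p ^ s"

lemma p_gt_1: "1 < p"
  using prime_gt_1_nat[OF prime] .

lemma Zp_poly_eval_apply: "F x s = f_mod s (x s)"
  by (simp add: Zp_poly_eval_def f_mod_def)

lemma funpow_Zp_poly_eval_apply: "(F ^^ m) x s = (f_mod s ^^ m) (x s)"
  by (induction m) (simp_all add: Zp_poly_eval_apply)

definition poly_int :: "nat \<Rightarrow> int \<Rightarrow> int" where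
  "poly_int t b = (\<Sum>i\<le>n. int (c i t) * b ^ i)"

definition deriv_int :: "nat \<Rightarrow> int \<Rightarrow> int" where
  "deriv_int t b = (\<Sum>i\<le>n. int (c i t) * of_nat i * b ^ (i - 1))"

lemma f_mod_cong_poly_int: "[int (f_mod t a) = poly_int t (int a)] (mod int p ^ t)"
  unfolding f_mod_def poly_int_def cong_def by (simp add: of_nat_mod)

text \<open>Since \<open>2s \<ge> s + 1\<close>, a perturbation of size \<open>p\<^sup>s\<close> is transported linearly modulo \<open>p\<^sup>s\<^sup>+\<^sup>1\<close>.\<close>
lemma f_mod_first_order:
  assumes "1 \<le> s" and "[int a = int b + int p ^ s * u] (mod int p ^ Suc s)"
  shows "[int (f_mod (Suc s) a) =
      int (f_mod (Suc s) b) + int p ^ s * u * deriv_int (Suc s) (int b)] (mod int p ^ Suc s)"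
proof -
  let ?m = "int p ^ Suc s" and ?h = "int p ^ s" and ?D = "deriv_int (Suc s) (int b)"
  obtain k where "int b + ?h * u = int a + ?m * k"
    using assms(2) unfolding cong_iff_lin by blast
  define v where "v = u - int p * k"
  have a: "int a = int b + ?h * v"
    using \<open>int b + ?h * u = int a + ?m * k\<close> unfolding v_def by (simp add: algebra_simps)
  obtain K where K: "poly_int (Suc s) (int a) = poly_int (Suc s) (int b) + ?h * v * ?D + (?h * v)\<^sup>2 * K"
    using polynomial_add_first_order[where C = "\<lambda>i. int (c i (Suc s))" and n = n and B = "int b" and h = "?h * v"]
    unfolding poly_int_def deriv_int_def a by blast
  have hh: "?h * ?h = ?m * int p ^ (s - 1)"
    using assms(1) by (simp flip: power_add power_Suc)
  have "(?h * v)\<^sup>2 * K = ?m * (int p ^ (s - 1) * v\<^sup>2 * K)"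
    by (simp add: power_mult_distrib power2_eq_square[of ?h] hh)
  moreover have "?h * v * ?D = ?h * u * ?D - ?m * (k * ?D)"
    unfolding v_def by (simp add: algebra_simps)
  ultimately have "poly_int (Suc s) (int a) - (poly_int (Suc s) (int b) + ?h * u * ?D)
      = ?m * (int p ^ (s - 1) * v\<^sup>2 * K - k * ?D)"
    unfolding K by (simp add: right_diff_distrib)
  then have "[poly_int (Suc s) (int a) = poly_int (Suc s) (int b) + ?h * u * ?D] (mod ?m)"
    unfolding cong_iff_dvd_diff by (metis dvd_triv_left)
  moreover have "[int (f_mod (Suc s) b) + ?h * u * ?D = poly_int (Suc s) (int b) + ?h * u * ?D] (mod ?m)"
    using f_mod_cong_poly_int[of "Suc s" b] by (intro cong_add) simp_all
  ultimately show ?thesis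
    using f_mod_cong_poly_int[of "Suc s" a] cong_sym cong_trans by meson
qed

lemma funpow_f_mod_first_order:
  assumes "1 \<le> s" and "[int a = int b + int p ^ s * u] (mod int p ^ Suc s)"
  shows "[int ((f_mod (Suc s) ^^ m) a) = int ((f_mod (Suc s) ^^ m) b)
     + int p ^ s * u * (\<Prod>i<m. deriv_int (Suc s) (int ((f_mod (Suc s) ^^ i) b)))] (mod int p ^ Suc s)"
proof (induction m)
  case (Suc m)
  then show ?case
    using f_mod_first_order[OF assms(1) Suc.IH[unfolded mult.assoc]] by (simp add: ac_simps)
qed (use assms(2) in simp)

end

section \<open>The cycles of a minimal polynomial map\<close>

locale Zp_poly_minimal = Zp_poly +
  fixes E :: "(nat \<Rightarrow> nat) set" and x0 :: "nat \<Rightarrow> nat"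
  assumes E_sub: "E \<subseteq> Zp p"
    and E_open: "openin (Zp_top p) E"
    and E_closed: "closedin (Zp_top p) E"
    and E_inv: "F ` E \<subseteq> E"
    and minimal: "minimal_on (Zp_top p) E F"
    and x0_in_E: "x0 \<in> E"
begin

lemma funpow_F_in_E: "x \<in> E \<Longrightarrow> (F ^^ m) x \<in> E"
  by (induction m) (use E_inv in auto)

lemma f_mod_reaches:
  assumes "x \<in> E" "y \<in> E"
  obtains m where "(f_mod s ^^ m) (x s) = y s"
proof -
  let ?X = "subtopology (Zp_top p) E"
  let ?C = "{z \<in> odometer (\<lambda>s. p ^ s). z s = y s} \<inter> E"
  have "?X closure_of {(F ^^ m) x | m. True} = E"
    using minimal assms(1) unfolding minimal_on_def by blast
  then have "y \<in> ?X closure_of {(F ^^ m) x | m. True}"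
    using assms(2) by simp
  then have closure: "\<And>T. y \<in> T \<Longrightarrow> openin ?X T \<Longrightarrow> \<exists>z. z \<in> {(F ^^ m) x | m. True} \<and> z \<in> T"
    unfolding in_closure_of by blast
  have "openin (Zp_top p) {z \<in> odometer (\<lambda>s. p ^ s). z s = y s}"
    unfolding Zp_top_def by (rule openin_odometer_cylinder)
  then have "openin ?X ?C"
    unfolding openin_subtopology by blast
  moreover have "y \<in> ?C" using assms(2) E_sub unfolding Zp_def by blast
  ultimately obtain z where "z \<in> {(F ^^ m) x | m. True}" "z \<in> ?C"
    using closure by meson
  then obtain m where "(F ^^ m) x s = y s" by blast
  then show ?thesis
    using that funpow_Zp_poly_eval_apply by metis
qed

text \<open>The cycle of \<open>x\<^sub>0 mod p\<^sup>s\<close> under \<open>f mod p\<^sup>s\<close>; by minimality it exhausts the image of \<open>E\<close>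
  at level \<open>s\<close>.\<close>

definition orbit :: "nat \<Rightarrow> nat \<Rightarrow> nat" where
  "orbit s m = (f_mod s ^^ m) (x0 s)"

definition period :: "nat \<Rightarrow> nat" where
  "period s = least_power (f_mod s) (x0 s)"

lemma orbit_eq_funpow_F: "orbit s m = (F ^^ m) x0 s"
  by (simp add: orbit_def funpow_Zp_poly_eval_apply)

lemma orbit_less: "orbit s m < p ^ s"
  unfolding orbit_eq_funpow_F using funpow_F_in_E[OF x0_in_E] E_sub Zp_less by blast

lemma orbit_level: "s \<le> t \<Longrightarrow> orbit s m = orbit t m mod p ^ s"
  unfolding orbit_eq_funpow_F using funpow_F_in_E[OF x0_in_E] E_sub Zp_mod_le by blast

lemma orbit_add: "orbit s (k + i) = (f_mod s ^^ k) (orbit s i)"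
  by (simp add: orbit_def funpow_add)

lemma orbit_periodic: obtains m where "0 < m" "orbit s m = x0 s"
proof -
  obtain m where "(f_mod s ^^ m) (F x0 s) = x0 s"
    using f_mod_reaches[OF _ x0_in_E] E_inv x0_in_E by blast
  then have "orbit s (Suc m) = x0 s"
    unfolding orbit_def funpow_Suc_right o_apply by (simp only: Zp_poly_eval_apply)
  then show ?thesis using that by blast
qed

lemma period_pos: "0 < period s"
  and orbit_period: "orbit s (period s) = x0 s"
  using orbit_periodic[of s] least_powerI unfolding orbit_def period_def by metis+

lemma orbit_eq_iff: "orbit s i = orbit s j \<longleftrightarrow> i mod period s = j mod period s"
  using orbit_periodic[of s] funpow_eq_iff_mod_least_power
  unfolding orbit_def period_def by metis

lemma period_dvd_period:
  assumes "s \<le> t"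
  shows "period s dvd period t"
proof -
  have "orbit t (period t) = orbit t 0"
    using orbit_period[of t] by (simp add: orbit_def)
  then have "orbit s (period t) = orbit s 0"
    using orbit_level[OF assms, of "period t"] orbit_level[OF assms, of 0] by simp
  then show ?thesis unfolding orbit_eq_iff by (simp add: dvd_eq_mod_eq_0)
qed

definition orbit_index :: "nat \<Rightarrow> (nat \<Rightarrow> nat) \<Rightarrow> nat" where
  "orbit_index s x = (SOME m. orbit s m = x s) mod period s"

lemma orbit_eq_iff_index:
  assumes "x \<in> E"
  shows "orbit s m = x s \<longleftrightarrow> m mod period s = orbit_index s x"
proof -
  obtain m' where "(f_mod s ^^ m') (x0 s) = x s"
    using f_mod_reaches[OF x0_in_E assms] .
  then have "orbit s (SOME m. orbit s m = x s) = x s"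
    unfolding orbit_def by (rule someI)
  then show ?thesis
    unfolding orbit_index_def using orbit_eq_iff by (metis mod_mod_trivial)
qed

lemma orbit_index_less: "orbit_index s x < period s"
  unfolding orbit_index_def using period_pos by simp

lemma orbit_orbit_index: "x \<in> E \<Longrightarrow> orbit s (orbit_index s x) = x s"
  using orbit_eq_iff_index orbit_index_less by simp

lemma orbit_index_level:
  assumes "x \<in> E" "s \<le> t"
  shows "orbit_index t x mod period s = orbit_index s x"
proof -
  have "orbit s (orbit_index t x) = x s"
    using orbit_level[OF assms(2)] orbit_orbit_index[OF assms(1)] Zp_mod_le[OF _ assms(2)]
      assms(1) E_sub by auto
  then show ?thesis using orbit_eq_iff_index[OF assms(1)] by blast
qed

lemma period_0: "period 0 = 1"
proof -
  have "orbit 0 1 = orbit 0 0" using orbit_less[of 0] by simp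
  then show ?thesis using orbit_eq_iff[of 0 1 0] by simp
qed

lemma period_1_le: "period 1 \<le> p"
proof -
  have "inj_on (orbit 1) {..<period 1}"
    unfolding inj_on_def orbit_eq_iff by simp
  moreover have "orbit 1 ` {..<period 1} \<subseteq> {..<p}"
    using orbit_less[of 1] by auto
  ultimately show ?thesis
    using card_inj_on_le[of "orbit 1" "{..<period 1}" "{..<p}"] by simp
qed

text \<open>Since \<open>E\<close> is open it contains a cylinder \<open>x\<^sub>0 + p\<^sup>r\<int>\<^sub>p\<close>, whose \<open>p\<^sup>B\<close> residues modulo \<open>p\<^sup>r\<^sup>+\<^sup>B\<close>
  all lie on the level-\<open>(r + B)\<close> cycle.\<close>
lemma period_unbounded: obtains t where "B < period t"
proof -
  obtain r where r: "\<And>y. y \<in> odometer (\<lambda>s. p ^ s) \<Longrightarrow> y r = x0 r \<Longrightarrow> y \<in> E"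
    using odometer_open_contains_cylinder[OF dvd_chain_power, of p E x0] E_open x0_in_E
    unfolding Zp_top_def by blast
  define t where "t = r + B"
  define g where "g j = x0 r + p ^ r * j" for j
  have x0r: "x0 r < p ^ r" using Zp_less x0_in_E E_sub by blast
  have "g ` {..<p ^ B} \<subseteq> orbit t ` {..<period t}"
  proof
    fix v assume "v \<in> g ` {..<p ^ B}"
    then obtain j where j: "j < p ^ B" "v = g j" by blast
    define z where "z = (\<lambda>u. g j mod p ^ u)"
    have "z \<in> Zp p" unfolding z_def using residues_in_Zp p_gt_1 by simp
    moreover have "z r = x0 r" unfolding z_def g_def using x0r by simp
    ultimately have zE: "z \<in> E" using r unfolding Zp_def by blast
    have "g j < p ^ r * (j + 1)" unfolding g_def using x0r by simp
    also have "\<dots> \<le> p ^ t"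
      using j(1) unfolding t_def power_add by (intro mult_le_mono2) simp
    finally have "z t = v" unfolding z_def using j by simp
    then show "v \<in> orbit t ` {..<period t}"
      using orbit_orbit_index[OF zE, of t] orbit_index_less[of t z] by (metis image_eqI lessThan_iff)
  qed
  then have "card (g ` {..<p ^ B}) \<le> card (orbit t ` {..<period t})"
    by (intro card_mono) auto
  moreover have "inj_on g {..<p ^ B}" unfolding inj_on_def g_def using p_gt_1 by simp
  ultimately have "p ^ B \<le> period t"
    using card_image_le[of "{..<period t}" "orbit t"] by (simp add: card_image)
  moreover have "B < p ^ B"
    using p_gt_1 less_exp[of B] power_mono[of 2 p B] by linarith
  ultimately show ?thesis using that[of t] by linarith
qed

end

section \<open>Lifting the period from level s to level s + 1\<close>

context Zp_poly_minimal
begin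

text \<open>\<open>slope i\<close> is \<open>f'\<close> at the \<open>i\<close>-th point of the level-1 cycle, and \<open>multiplier s\<close> is
  \<open>(f\<^sup>\<ell>\<^sup>s)'(x\<^sub>0) mod p\<close> for the level-\<open>s\<close> period \<open>\<ell>\<^sub>s\<close>.\<close>

definition slope :: "nat \<Rightarrow> int" where
  "slope i = deriv_int 1 (int (orbit 1 i))"

definition multiplier :: "nat \<Rightarrow> int" where
  "multiplier s = (\<Prod>i<period s. slope i)"

lemma deriv_int_orbit_cong: "[deriv_int (Suc s) (int (orbit (Suc s) i)) = slope i] (mod int p)"
  unfolding deriv_int_def slope_def
proof (intro cong_sum cong_mult cong_pow cong_refl)
  fix j assume "j \<in> {..n}"
  then have "c j 1 = c j (Suc s) mod p ^ 1"
    using Zp_mod_le[OF coeffs, of j 1 "Suc s"] by simp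
  then show "[int (c j (Suc s)) = int (c j 1)] (mod int p)"
    unfolding cong_def by (simp flip: of_nat_mod)
next
  have "orbit 1 i = orbit (Suc s) i mod p ^ 1" by (rule orbit_level) simp
  then show "[int (orbit (Suc s) i) = int (orbit 1 i)] (mod int p)"
    unfolding cong_def by (simp flip: of_nat_mod)
qed

lemma slope_periodic:
  assumes "1 \<le> s"
  shows "slope (i + period s) = slope i"
proof -
  have "orbit s (i + period s) = orbit s i" unfolding orbit_eq_iff by simp
  then have "orbit 1 (i + period s) = orbit 1 i"
    using orbit_level[OF assms] by metis
  then show ?thesis unfolding slope_def by simp
qed

lemma multiplier_Suc:
  assumes "1 \<le> s" "period (Suc s) = j * period s"
  shows "multiplier (Suc s) = multiplier s ^ j"
  unfolding multiplier_def assms(2)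
  by (rule prod_lessThan_periodic) (rule slope_periodic[OF assms(1)])

lemma orbit_mult_period_first_order:
  assumes "1 \<le> s"
    and \<alpha>: "int (orbit (Suc s) (period s)) = int (x0 (Suc s)) + int p ^ s * \<alpha>"
  shows "[int (orbit (Suc s) (r * period s)) =
      int (x0 (Suc s)) + int p ^ s * \<alpha> * (\<Sum>i<r. multiplier s ^ i)] (mod int p ^ Suc s)"
proof (induction r)
  case 0
  show ?case by (simp add: orbit_def)
next
  case (Suc r)
  let ?L = "period s" and ?S = "\<Sum>i<r. multiplier s ^ i"
  have "[int (orbit (Suc s) (?L + r * ?L)) = int (orbit (Suc s) ?L)
      + int p ^ s * (\<alpha> * ?S) * (\<Prod>i<?L. deriv_int (Suc s) (int (orbit (Suc s) i)))] (mod int p ^ Suc s)"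
    using funpow_f_mod_first_order[OF assms(1) Suc.IH[unfolded mult.assoc], of ?L]
    unfolding orbit_add orbit_def by (simp add: funpow_add)
  moreover have "[(\<Prod>i<?L. deriv_int (Suc s) (int (orbit (Suc s) i))) = multiplier s] (mod int p)"
    unfolding multiplier_def by (intro cong_prod deriv_int_orbit_cong)
  ultimately have "[int (orbit (Suc s) (?L + r * ?L)) =
      int (orbit (Suc s) ?L) + int p ^ s * (\<alpha> * ?S) * multiplier s] (mod int p ^ Suc s)"
    using cong_add[OF cong_refl cong_mult_power_Suc] cong_trans by blast
  moreover have "int (orbit (Suc s) ?L) + int p ^ s * (\<alpha> * ?S) * multiplier s =
      int (x0 (Suc s)) + int p ^ s * \<alpha> * (\<Sum>i<Suc r. multiplier s ^ i)"
    unfolding \<alpha> geometric_sum_Suc by (simp add: algebra_simps)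
  ultimately show ?case by simp
qed

lemma period_ratio_dvd_iff:
  assumes "1 \<le> s" "period (Suc s) = j * period s"
  obtains \<alpha> where "\<And>r. j dvd r \<longleftrightarrow> int p dvd \<alpha> * (\<Sum>i<r. multiplier s ^ i)"
proof -
  let ?L = "period s" and ?y = "x0 (Suc s)" and ?m = "int p ^ Suc s"
  have "x0 s = orbit (Suc s) ?L mod p ^ s"
    unfolding orbit_period[of s, symmetric] by (rule orbit_level) simp
  moreover have "x0 s = ?y mod p ^ s"
    by (rule Zp_mod_le) (use x0_in_E E_sub in auto)
  ultimately have "[?y = orbit (Suc s) ?L] (mod p ^ s)"
    unfolding cong_def by simp
  then have "[int ?y = int (orbit (Suc s) ?L)] (mod int p ^ s)"
    using cong_int_iff[of ?y "orbit (Suc s) ?L" "p ^ s"] by simp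
  then obtain \<alpha> where \<alpha>: "int (orbit (Suc s) ?L) = int ?y + int p ^ s * \<alpha>"
    unfolding cong_iff_lin by blast
  have "j dvd r \<longleftrightarrow> int p dvd \<alpha> * (\<Sum>i<r. multiplier s ^ i)" for r
  proof -
    have "j dvd r \<longleftrightarrow> j * ?L dvd r * ?L" using period_pos[of s] by simp
    also have "\<dots> \<longleftrightarrow> orbit (Suc s) (r * ?L) = orbit (Suc s) 0"
      unfolding orbit_eq_iff assms(2) by (simp add: dvd_eq_mod_eq_0)
    also have "\<dots> \<longleftrightarrow> [orbit (Suc s) (r * ?L) = ?y] (mod p ^ Suc s)"
      using cong_less_modulus_unique_nat[OF _ orbit_less] Zp_less[of x0 p "Suc s"] x0_in_E E_sub
      by (auto simp: orbit_def)
    also have "\<dots> \<longleftrightarrow> [int (orbit (Suc s) (r * ?L)) = int ?y] (mod ?m)"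
      using cong_int_iff[of "orbit (Suc s) (r * ?L)" ?y "p ^ Suc s"] by simp
    also have "\<dots> \<longleftrightarrow> [int ?y + int p ^ s * \<alpha> * (\<Sum>i<r. multiplier s ^ i) = int ?y] (mod ?m)"
      using orbit_mult_period_first_order[OF assms(1) \<alpha>, of r] cong_sym cong_trans by meson
    also have "\<dots> \<longleftrightarrow> int p ^ s * int p dvd int p ^ s * (\<alpha> * (\<Sum>i<r. multiplier s ^ i))"
      by (simp add: cong_iff_dvd_diff mult.assoc power_Suc2)
    also have "\<dots> \<longleftrightarrow> int p dvd \<alpha> * (\<Sum>i<r. multiplier s ^ i)"
      using p_gt_1 by simp
    finally show ?thesis .
  qed
  then show ?thesis by (rule that)
qed

lemma period_Suc_cases:
  assumes "1 \<le> s"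
  obtains j where "period (Suc s) = j * period s" "multiplier (Suc s) = multiplier s ^ j"
    "j = 1 \<or> ([multiplier s = 1] (mod int p) \<and> j = p) \<or>
     (\<not> [multiplier s = 1] (mod int p) \<and> (\<forall>r. j dvd r \<longleftrightarrow> [multiplier s ^ r = 1] (mod int p))
       \<and> j dvd p - 1)"
proof -
  obtain j where j: "period (Suc s) = j * period s"
    using period_dvd_period[of s "Suc s"] by (metis dvdE le_SucI mult.commute order_refl)
  have "0 < j" using period_pos[of "Suc s"] j by (cases j) auto
  obtain \<alpha> where "\<And>r. j dvd r \<longleftrightarrow> int p dvd \<alpha> * (\<Sum>i<r. multiplier s ^ i)"
    using period_ratio_dvd_iff[OF assms j] by metis
  then show ?thesis
    using that[OF j multiplier_Suc[OF assms j]] dvd_iff_dvd_geometric_sum_cases[OF prime \<open>0 < j\<close>]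
    by blast
qed

end

section \<open>The shape of the sequence of periods\<close>

context Zp_poly_minimal
begin

definition multiplier_order :: nat where
  "multiplier_order = (LEAST j. 0 < j \<and> [multiplier 1 ^ j = 1] (mod int p))"

lemma multiplier_order_eqI:
  assumes "0 < j" "\<And>r. j dvd r \<longleftrightarrow> [multiplier 1 ^ r = 1] (mod int p)"
  shows "multiplier_order = j"
  unfolding multiplier_order_def
proof (rule Least_equality)
  show "0 < j \<and> [multiplier 1 ^ j = 1] (mod int p)" using assms(1) assms(2)[of j] by simp
  show "j \<le> y" if "0 < y \<and> [multiplier 1 ^ y = 1] (mod int p)" for y
    using that assms(2)[of y] by (simp add: dvd_imp_le)
qed

text \<open>The facts
  \<open>0 < d\<close> and \<open>d dvd p - 1\<close> are carried along because they are only established at the first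
  growth: if \<open>p\<close> divided \<open>M\<^sub>1\<close>, the \<open>LEAST\<close> defining \<open>multiplier_order\<close> would be junk.\<close>

definition period_stable :: "nat \<Rightarrow> bool" where
  "period_stable s \<longleftrightarrow> period s = period 1 \<and> [multiplier s = multiplier 1] (mod int p)"

definition period_grown :: "nat \<Rightarrow> bool" where
  "period_grown s \<longleftrightarrow> 0 < multiplier_order \<and> multiplier_order dvd p - 1 \<and>
     (\<exists>e<s. period s = period 1 * multiplier_order * p ^ e \<and> [multiplier s = 1] (mod int p))"

lemma period_grown_Suc:
  assumes "1 \<le> s" "period_grown s"
  shows "period_grown (Suc s)"
proof -
  obtain e where e: "e < s" "period s = period 1 * multiplier_order * p ^ e"
    and M: "[multiplier s = 1] (mod int p)"
    using assms(2) unfolding period_grown_def by blast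
  obtain j where j: "period (Suc s) = j * period s" "multiplier (Suc s) = multiplier s ^ j"
    and cases: "j = 1 \<or> ([multiplier s = 1] (mod int p) \<and> j = p) \<or>
      \<not> [multiplier s = 1] (mod int p) \<and> (\<forall>r. j dvd r \<longleftrightarrow> [multiplier s ^ r = 1] (mod int p))
        \<and> j dvd p - 1"
    by (rule period_Suc_cases[OF assms(1)])
  have "[multiplier (Suc s) = 1] (mod int p)"
    using cong_pow[OF M, of j] j(2) by simp
  moreover from cases M have "j = 1 \<or> j = p" by blast
  then have "\<exists>e'<Suc s. period (Suc s) = period 1 * multiplier_order * p ^ e'"
  proof
    assume "j = 1"
    then show ?thesis using e j(1) by (intro exI[of _ e]) simp
  next
    assume "j = p"
    then show ?thesis using e j(1) by (intro exI[of _ "Suc e"]) (simp add: ac_simps)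
  qed
  ultimately show ?thesis
    using assms(2) unfolding period_grown_def by blast
qed

lemma period_stable_Suc:
  assumes "1 \<le> s" "period_stable s"
  shows "period_stable (Suc s) \<or> period_grown (Suc s)"
proof -
  have stable: "period s = period 1" "[multiplier s = multiplier 1] (mod int p)"
    using assms(2) unfolding period_stable_def by auto
  obtain j where j: "period (Suc s) = j * period s" "multiplier (Suc s) = multiplier s ^ j"
    and cases: "j = 1 \<or> ([multiplier s = 1] (mod int p) \<and> j = p) \<or>
      \<not> [multiplier s = 1] (mod int p) \<and> (\<forall>r. j dvd r \<longleftrightarrow> [multiplier s ^ r = 1] (mod int p))
        \<and> j dvd p - 1"
    by (rule period_Suc_cases[OF assms(1)])
  have same_order: "[multiplier s ^ r = 1] (mod int p) \<longleftrightarrow> [multiplier 1 ^ r = 1] (mod int p)" for r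
    using cong_pow[OF stable(2), of r] cong_sym cong_trans by meson
  from cases show ?thesis
  proof (elim disjE conjE)
    assume "j = 1"
    then show ?thesis using stable j unfolding period_stable_def by simp
  next
    assume M: "[multiplier s = 1] (mod int p)" and "j = p"
    then have "multiplier_order = 1"
      using same_order cong_pow[OF M] by (intro multiplier_order_eqI) auto
    moreover have "[multiplier (Suc s) = 1] (mod int p)"
      using cong_pow[OF M, of p] j(2) \<open>j = p\<close> by simp
    ultimately have "period_grown (Suc s)"
      using stable(1) j(1) \<open>j = p\<close> assms(1) unfolding period_grown_def
      by (auto intro!: exI[of _ 1])
    then show ?thesis ..
  next
    assume "\<not> [multiplier s = 1] (mod int p)" "j dvd p - 1"
      and order: "\<forall>r. j dvd r \<longleftrightarrow> [multiplier s ^ r = 1] (mod int p)"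
    have "0 < j" using j(1) period_pos[of "Suc s"] by (cases j) auto
    then have "multiplier_order = j"
      using order same_order by (intro multiplier_order_eqI) auto
    moreover have "[multiplier (Suc s) = 1] (mod int p)"
      using order[rule_format, of j] j(2) by simp
    ultimately have "period_grown (Suc s)"
      using stable(1) j(1) \<open>0 < j\<close> \<open>j dvd p - 1\<close> unfolding period_grown_def
      by (auto intro!: exI[of _ 0])
    then show ?thesis ..
  qed
qed

lemma period_stable_or_grown:
  assumes "1 \<le> s"
  shows "period_stable s \<or> period_grown s"
  using assms
proof (induction s rule: dec_induct)
  case base
  then show ?case unfolding period_stable_def by simp
next
  case (step s)
  then show ?case using period_stable_Suc period_grown_Suc by blast
qed

lemma period_grown_mono:
  assumes "period_grown s" "s \<le> t"
  shows "period_grown t"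
  using assms(2)
proof (induction t rule: dec_induct)
  case (step t)
  have "1 \<le> t" using assms(1) step.hyps(1) unfolding period_grown_def by auto
  then show ?case using period_grown_Suc step.IH by blast
qed (rule assms(1))

lemma period_grown_exists: obtains t where "period_grown t"
proof -
  obtain t where t: "period 1 < period t" by (rule period_unbounded)
  have "t \<noteq> 0"
  proof
    assume "t = 0"
    then show False using t period_0 period_pos[of 1] by simp
  qed
  then have "period_stable t \<or> period_grown t" by (intro period_stable_or_grown) simp
  then show ?thesis using t that unfolding period_stable_def by auto
qed

lemma multiplier_order_pos: "0 < multiplier_order"
  and multiplier_order_dvd: "multiplier_order dvd p - 1"
  using period_grown_exists unfolding period_grown_def by blast+

lemma period_dvd_odo_seq: "period s dvd odo_seq p (period 1) multiplier_order (Suc s)"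
proof (cases "s = 0")
  case True
  then show ?thesis using period_0 by simp
next
  case False
  then have "period_stable s \<or> period_grown s" by (intro period_stable_or_grown) simp
  then show ?thesis
  proof
    assume "period_stable s"
    then show ?thesis unfolding period_stable_def odo_seq_Suc by simp
  next
    assume "period_grown s"
    then obtain e where "e < s" and e: "period s = period 1 * multiplier_order * p ^ e"
      unfolding period_grown_def by blast
    then have "p ^ e dvd p ^ s" by (simp add: le_imp_power_dvd)
    then show ?thesis
      unfolding odo_seq_Suc e by (intro mult_dvd_mono) simp_all
  qed
qed

lemma odo_seq_dvd_period:
  obtains s where "t \<le> s" "odo_seq p (period 1) multiplier_order t dvd period s"
proof -
  obtain t1 where t1: "period_grown t1" by (rule period_grown_exists)
  obtain u where u: "period 1 * multiplier_order * p ^ t < period u" by (rule period_unbounded)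
  define s where "s = max (max t u) t1"
  obtain e where e: "period s = period 1 * multiplier_order * p ^ e"
    using period_grown_mono[OF t1, of s] unfolding period_grown_def s_def by auto
  have "period u \<le> period s"
    using period_dvd_period[of u s] period_pos[of s] unfolding s_def by (simp add: dvd_imp_le)
  then have "period 1 * multiplier_order * p ^ t < period 1 * multiplier_order * p ^ e"
    using u e by linarith
  then have "p ^ t < p ^ e" by simp
  then have "t < e" using p_gt_1 power_less_imp_less_exp by blast
  then have "p ^ (t - 1) dvd p ^ e" "p ^ t dvd p ^ e" by (simp_all add: le_imp_power_dvd)
  then have "odo_seq p (period 1) multiplier_order t dvd period s"
    unfolding e odo_seq_def by (auto intro: mult_dvd_mono)
  then show ?thesis using that[of s] unfolding s_def by simp
qed

end

section \<open>Conjugacy with the adding machine\<close>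

text \<open>The conjugacy only uses that the periods \<open>\<ell>\<^sub>s\<close> and the odometer moduli \<open>P\<^sub>t\<close> are cofinal
  in each other with respect to divisibility; \<open>x\<close> is sent to its position on the level-\<open>s\<close>
  cycles.\<close>

locale Zp_poly_cofinal = Zp_poly_minimal +
  fixes P :: "nat \<Rightarrow> nat"
  assumes P_pos: "0 < P t"
    and P_chain: "dvd_chain P"
    and period_dvd_P: "period s dvd P (Suc s)"
    and P_dvd_period: "\<exists>s\<ge>t. P t dvd period s"
begin

definition cofinal_level :: "nat \<Rightarrow> nat" where
  "cofinal_level t = (SOME s. t \<le> s \<and> P t dvd period s)"

lemma le_cofinal_level: "t \<le> cofinal_level t"
  and P_dvd_period_cofinal_level: "P t dvd period (cofinal_level t)"
  using someI_ex[OF P_dvd_period[of t]] unfolding cofinal_level_def by auto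

lemma orbit_index_mod_eq:
  assumes "x \<in> E" "m dvd period a" "m dvd period b"
  shows "orbit_index a x mod m = orbit_index b x mod m"
proof -
  have "orbit_index (max a b) x mod m = orbit_index a x mod m"
    using orbit_index_level[OF assms(1), of a "max a b"] assms(2) by (metis max.cobounded1 mod_mod_cancel)
  moreover have "orbit_index (max a b) x mod m = orbit_index b x mod m"
    using orbit_index_level[OF assms(1), of b "max a b"] assms(3) by (metis max.cobounded2 mod_mod_cancel)
  ultimately show ?thesis by simp
qed

definition to_odometer :: "(nat \<Rightarrow> nat) \<Rightarrow> nat \<Rightarrow> nat" where
  "to_odometer x = (\<lambda>t. orbit_index (cofinal_level t) x mod P t)"

definition from_odometer :: "(nat \<Rightarrow> nat) \<Rightarrow> nat \<Rightarrow> nat" where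
  "from_odometer y = (\<lambda>s. orbit s (y (Suc s)))"

lemma to_odometer_in_odometer:
  assumes "x \<in> E"
  shows "to_odometer x \<in> odometer P"
proof -
  have "to_odometer x t = to_odometer x (Suc t) mod P t" for t
  proof -
    have "P t dvd P (Suc t)" using P_chain unfolding dvd_chain_def by blast
    then have "to_odometer x (Suc t) mod P t = orbit_index (cofinal_level (Suc t)) x mod P t"
      unfolding to_odometer_def by (simp add: mod_mod_cancel)
    also have "\<dots> = orbit_index (cofinal_level t) x mod P t"
      using orbit_index_mod_eq[OF assms _ P_dvd_period_cofinal_level]
        dvd_trans[OF \<open>P t dvd P (Suc t)\<close> P_dvd_period_cofinal_level] by simp
    finally show ?thesis unfolding to_odometer_def by simp
  qed
  moreover have "to_odometer x t < P t" for t
    unfolding to_odometer_def using P_pos by simp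
  ultimately show ?thesis
    unfolding odometer_def by blast
qed

lemma from_odometer_in_Zp:
  assumes "y \<in> odometer P"
  shows "from_odometer y \<in> Zp p"
proof -
  have "from_odometer y s = from_odometer y (Suc s) mod p ^ s" for s
  proof -
    have "y (Suc s) = y (Suc (Suc s)) mod P (Suc s)"
      using assms unfolding odometer_def by blast
    then have "y (Suc s) mod period s = y (Suc (Suc s)) mod period s"
      using period_dvd_P[of s] by (simp add: mod_mod_cancel)
    then have "orbit s (y (Suc s)) = orbit s (y (Suc (Suc s)))"
      by (simp only: orbit_eq_iff)
    also have "\<dots> = orbit (Suc s) (y (Suc (Suc s))) mod p ^ s"
      by (rule orbit_level) simp
    finally show ?thesis unfolding from_odometer_def .
  qed
  moreover have "from_odometer y s < p ^ s" for s
    unfolding from_odometer_def by (rule orbit_less)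
  ultimately show ?thesis
    unfolding Zp_def odometer_def by blast
qed

lemma from_odometer_in_E:
  assumes "y \<in> odometer P"
  shows "from_odometer y \<in> E"
proof (rule ccontr)
  assume "from_odometer y \<notin> E"
  then have "from_odometer y \<in> odometer (\<lambda>s. p ^ s) - E"
    using from_odometer_in_Zp[OF assms] unfolding Zp_def by blast
  moreover have "openin (odometer_top (\<lambda>s. p ^ s)) (odometer (\<lambda>s. p ^ s) - E)"
    using E_closed unfolding closedin_def Zp_top_def by simp
  ultimately obtain r where r: "\<And>z. z \<in> odometer (\<lambda>s. p ^ s) \<Longrightarrow> z r = from_odometer y r
      \<Longrightarrow> z \<in> odometer (\<lambda>s. p ^ s) - E"
    using odometer_open_contains_cylinder[OF dvd_chain_power] by metis
  have "(F ^^ y (Suc r)) x0 \<in> E" by (rule funpow_F_in_E[OF x0_in_E])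
  moreover have "(F ^^ y (Suc r)) x0 r = from_odometer y r"
    unfolding from_odometer_def orbit_eq_funpow_F ..
  moreover have "(F ^^ y (Suc r)) x0 \<in> odometer (\<lambda>s. p ^ s)"
    using \<open>(F ^^ y (Suc r)) x0 \<in> E\<close> E_sub unfolding Zp_def by blast
  ultimately show False using r by blast
qed

lemma from_to_odometer:
  assumes "x \<in> E"
  shows "from_odometer (to_odometer x) = x"
proof
  fix s
  let ?a = "cofinal_level (Suc s)"
  have "(orbit_index ?a x mod P (Suc s)) mod period s = orbit_index ?a x mod period s"
    using period_dvd_P[of s] by (simp add: mod_mod_cancel)
  also have "\<dots> = orbit_index s x"
    using orbit_index_level[OF assms] le_cofinal_level[of "Suc s"] by simp
  finally show "from_odometer (to_odometer x) s = x s"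
    unfolding from_odometer_def to_odometer_def using orbit_eq_iff_index[OF assms] by blast
qed

lemma to_from_odometer:
  assumes "y \<in> odometer P"
  shows "to_odometer (from_odometer y) = y"
proof
  fix t
  let ?a = "cofinal_level t"
  have "orbit ?a (y (Suc ?a)) = from_odometer y ?a"
    unfolding from_odometer_def ..
  then have "y (Suc ?a) mod period ?a = orbit_index ?a (from_odometer y)"
    using orbit_eq_iff_index[OF from_odometer_in_E[OF assms]] by blast
  then have "orbit_index ?a (from_odometer y) mod P t = y (Suc ?a) mod P t"
    using P_dvd_period_cofinal_level[of t] by (metis mod_mod_cancel)
  also have "\<dots> = y t"
    using odometer_mod_le[OF assms P_chain, of t "Suc ?a"] le_cofinal_level[of t] by simp
  finally show "to_odometer (from_odometer y) t = y t"
    unfolding to_odometer_def .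
qed

lemma to_odometer_F:
  assumes "x \<in> E"
  shows "to_odometer (F x) = adding_machine P (to_odometer x)"
proof
  fix t
  let ?a = "cofinal_level t"
  have "orbit ?a (1 + orbit_index ?a x) = f_mod ?a (orbit ?a (orbit_index ?a x))"
    unfolding orbit_add by simp
  also have "\<dots> = F x ?a"
    unfolding orbit_orbit_index[OF assms] Zp_poly_eval_apply ..
  finally have "orbit ?a (1 + orbit_index ?a x) = F x ?a" .
  moreover have "F x \<in> E" using E_inv assms by blast
  ultimately have "(1 + orbit_index ?a x) mod period ?a = orbit_index ?a (F x)"
    using orbit_eq_iff_index by metis
  then have "orbit_index ?a (F x) mod P t = (1 + orbit_index ?a x) mod P t"
    using mod_mod_cancel[OF P_dvd_period_cofinal_level[of t], of "1 + orbit_index ?a x"] by simp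
  also have "\<dots> = (orbit_index ?a x mod P t + 1) mod P t"
    by (simp add: mod_simps)
  finally show "to_odometer (F x) t = adding_machine P (to_odometer x) t"
    unfolding to_odometer_def adding_machine_def .
qed

lemma top_conjugate_adding_machine:
  "top_conjugate (subtopology (Zp_top p) E) F (odometer_top P) (adding_machine P)"
proof -
  let ?X = "subtopology (Zp_top p) E"
  have E_odometer: "E \<subseteq> odometer (\<lambda>s. p ^ s)" using E_sub unfolding Zp_def .
  then have topspace_X: "topspace ?X = E" unfolding Zp_top_def by auto
  have "continuous_map ?X (odometer_top P) to_odometer"
    unfolding Zp_top_def
  proof (rule continuous_map_odometer[OF E_odometer])
    show "to_odometer ` E \<subseteq> odometer P" using to_odometer_in_odometer by blast
    show "\<exists>r. \<forall>x\<in>E. \<forall>y\<in>E. x r = y r \<longrightarrow> to_odometer x t = to_odometer y t" for t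
      by (rule exI[of _ "cofinal_level t"]) (simp add: to_odometer_def orbit_index_def)
  qed
  moreover have "continuous_map (odometer_top P) ?X from_odometer"
  proof -
    have "continuous_map (subtopology (odometer_top P) (odometer P)) (odometer_top (\<lambda>s. p ^ s))
        from_odometer"
    proof (rule continuous_map_odometer)
      show "from_odometer ` odometer P \<subseteq> odometer (\<lambda>s. p ^ s)"
        using from_odometer_in_Zp unfolding Zp_def by blast
      show "\<exists>r. \<forall>x\<in>odometer P. \<forall>y\<in>odometer P. x r = y r \<longrightarrow> from_odometer x s = from_odometer y s"
        for s by (rule exI[of _ "Suc s"]) (simp add: from_odometer_def)
    qed simp
    then show ?thesis
      unfolding Zp_top_def continuous_map_in_subtopology
      using from_odometer_in_E subtopology_topspace[of "odometer_top P"] by auto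
  qed
  ultimately have "homeomorphic_map ?X (odometer_top P) to_odometer"
    unfolding homeomorphic_map_maps homeomorphic_maps_def
    using topspace_X from_to_odometer to_from_odometer by auto
  then show ?thesis
    unfolding top_conjugate_def using topspace_X to_odometer_F by auto
qed

end

theorem theoremC:
  fixes p n :: nat and c :: "nat \<Rightarrow> nat \<Rightarrow> nat" and E :: "(nat \<Rightarrow> nat) set"
  assumes "prime p"
    and coeffs: "\<And>i. i \<le> n \<Longrightarrow> c i \<in> Zp p"
    and lead: "c n \<noteq> Zp_zero"
    and deg: "n \<ge> 2"
    and E_sub: "E \<subseteq> Zp p"
    and E_ne: "E \<noteq> {}"
    and E_open: "openin (Zp_top p) E"
    and E_closed: "closedin (Zp_top p) E"
    and E_inv: "Zp_poly_eval p n c ` E \<subseteq> E"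
    and minimal: "minimal_on (Zp_top p) E (Zp_poly_eval p n c)"
  shows "\<exists>k d. 1 \<le> k \<and> k \<le> p \<and> d > 0 \<and> d dvd (p - 1) \<and>
           top_conjugate (subtopology (Zp_top p) E) (Zp_poly_eval p n c)
             (odometer_top (odo_seq p k d)) (adding_machine (odo_seq p k d))"
proof -
  obtain x0 where "x0 \<in> E" using E_ne by blast
  interpret Zp_poly_minimal p n c E x0
    by unfold_locales (use assms \<open>x0 \<in> E\<close> in auto)
  interpret Zp_poly_cofinal p n c E x0 "odo_seq p (period 1) multiplier_order"
  proof
    show "0 < odo_seq p (period 1) multiplier_order t" for t
      using odo_seq_pos p_gt_1 period_pos multiplier_order_pos by simp
    show "\<exists>s\<ge>t. odo_seq p (period 1) multiplier_order t dvd period s" for t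
      using odo_seq_dvd_period by metis
  qed (use dvd_chain_odo_seq period_dvd_odo_seq in auto)
  show ?thesis
    using period_pos[of 1] period_1_le multiplier_order_pos multiplier_order_dvd
      top_conjugate_adding_machine by (intro exI[of _ "period 1"] exI[of _ multiplier_order]) simp
qed

end
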